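(* Let $\mathcal{H}^-_{A_{n-1}}$ be the degenerate spin affine Hecke algebra of type $A_{n-1}$. Let $\gamma=(\gamma_1,\dots,\gamma_\ell)$ be a composition of $n$ with $n-\ell$ even, and let $\mu$ be the partition of $n$ obtained by reordering the parts of $\gamma$. If $\mu$ has an even part, then $t_\gamma\in[\mathcal{H}^-_{A_{n-1}},\mathcal{H}^-_{A_{n-1}}]$; if all parts of $\mu$ are odd, then $t_\gamma-\epsilon t_\mu\in[\mathcal{H}^-_{A_{n-1}},\mathcal{H}^-_{A_{n-1}}]$ for some $\epsilon\in\{1,-1\}$.
   Context: $\mathbb{C}S_n^-$ is generated by $t_1,\dots,t_{n-1}$ with $t_i^2=1$, $t_it_{i+1}t_i=t_{i+1}t_it_{i+1}$, $(t_it_j)^2=-1$ for $|i-j|>1$. $\mathcal{H}^-_{A_{n-1}}$ is generated by $b_1,\dots,b_n$ (with $b_ib_j=-b_jb_i$ for $i\ne j$) and $\mathbb{C}S_n^-$, subject to $t_ib_i+b_{i+1}t_i=1$ and $t_jb_i+b_it_j=0$ ($i\ne j,j+1$). $[H,H]$ is the linear span of all $hh'-h'h$. For a composition $\gamma$ (sequence of positive integers summing to $n$; a partition is a weakly decreasing one), $t_\gamma=T_1T_2\cdots T_\ell$ where, with $a_k=\gamma_1+\dots+\gamma_{k-1}$, $T_k=t_{a_k+1}t_{a_k+2}\cdots t_{a_k+\gamma_k-1}$ (empty product $1$ if $\gamma_k=1$); thus $t_\gamma$ is a product of $n-\ell$ generators. $t_\mu$ is defined in the same way for the composition $\mu$.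 *)

theory Defs
  imports Complex_Main "HOL-Library.Poly_Mapping" "HOL-Library.Multiset"
begin

(* Generators of the degenerate spin affine Hecke algebra H^-_{A_{n-1}}:
   T i  stands for t_i  (1 <= i <= n-1),  B i stands for b_i (1 <= i <= n). *)
datatype gen = T nat | B nat

definition gens :: "nat \<Rightarrow> gen set" where
  "gens n = {T i | i. 1 \<le> i \<and> i \<le> n - 1} \<union> {B i | i. 1 \<le> i \<and> i \<le> n}"

(* Free associative C-algebra on the generators: finitely supported
   complex-valued functions on words. *)
type_synonym fa = "gen list \<Rightarrow>\<^sub>0 complex"

definition wd :: "gen list \<Rightarrow> fa" where
  "wd w = Poly_Mapping.single w 1"

definition fmul :: "fa \<Rightarrow> fa \<Rightarrow> fa" where
  "fmul p q = (\<Sum>u\<in>Poly_Mapping.keys p. \<Sum>v\<in>Poly_Mapping.keys q.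
       Poly_Mapping.single (u @ v) (Poly_Mapping.lookup p u * Poly_Mapping.lookup q v))"

definition fscale :: "complex \<Rightarrow> fa \<Rightarrow> fa" where
  "fscale c p = Poly_Mapping.map (\<lambda>x. c * x) p"

definition free_alg :: "nat \<Rightarrow> fa set" where
  "free_alg n = {p. \<forall>w\<in>Poly_Mapping.keys p. set w \<subseteq> gens n}"

definition relators :: "nat \<Rightarrow> fa set" where
  "relators n =
     {wd [T i, T i] - wd [] | i. 1 \<le> i \<and> i \<le> n - 1}
   \<union> {wd [T i, T (i+1), T i] - wd [T (i+1), T i, T (i+1)] | i. 1 \<le> i \<and> i + 1 \<le> n - 1}
   \<union> {wd [T i, T j, T i, T j] + wd [] | i j. 1 \<le> i \<and> i \<le> n - 1 \<and> 1 \<le> j \<and> j \<le> n - 1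
                                        \<and> (i > j + 1 \<or> j > i + 1)}
   \<union> {wd [B i, B j] + wd [B j, B i] | i j. 1 \<le> i \<and> i \<le> n \<and> 1 \<le> j \<and> j \<le> n \<and> i \<noteq> j}
   \<union> {wd [T i, B i] + wd [B (i+1), T i] - wd [] | i. 1 \<le> i \<and> i \<le> n - 1}
   \<union> {wd [T j, B i] + wd [B i, T j] | i j. 1 \<le> i \<and> i \<le> n \<and> 1 \<le> j \<and> j \<le> n - 1
                                        \<and> i \<noteq> j \<and> i \<noteq> j + 1}"

inductive_set rel_ideal :: "nat \<Rightarrow> fa set" for n where
  rel: "r \<in> relators n \<Longrightarrow> r \<in> rel_ideal n"
| zero: "0 \<in> rel_ideal n"
| add: "x \<in> rel_ideal n \<Longrightarrow> y \<in> rel_ideal n \<Longrightarrow> x + y \<in> rel_ideal n"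
| scale: "x \<in> rel_ideal n \<Longrightarrow> fscale c x \<in> rel_ideal n"
| lmul: "x \<in> rel_ideal n \<Longrightarrow> a \<in> free_alg n \<Longrightarrow> fmul a x \<in> rel_ideal n"
| rmul: "x \<in> rel_ideal n \<Longrightarrow> a \<in> free_alg n \<Longrightarrow> fmul x a \<in> rel_ideal n"

inductive_set comm_span :: "nat \<Rightarrow> fa set" for n where
  comm: "a \<in> free_alg n \<Longrightarrow> b \<in> free_alg n \<Longrightarrow> fmul a b - fmul b a \<in> comm_span n"
| zero: "0 \<in> comm_span n"
| add: "x \<in> comm_span n \<Longrightarrow> y \<in> comm_span n \<Longrightarrow> x + y \<in> comm_span n"
| scale: "x \<in> comm_span n \<Longrightarrow> fscale c x \<in> comm_span n"

(* For x in the free algebra, its image in H = free_alg / rel_ideal lies in [H,H]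
   iff x lies in comm_span + rel_ideal. *)
definition in_commutator_H :: "nat \<Rightarrow> fa \<Rightarrow> bool" where
  "in_commutator_H n x \<longleftrightarrow> (\<exists>c\<in>comm_span n. \<exists>i\<in>rel_ideal n. x = c + i)"

fun tword :: "nat \<Rightarrow> nat list \<Rightarrow> gen list" where
  "tword a [] = []"
| "tword a (g # gs) = map T [a + 1 ..< a + g] @ tword (a + g) gs"

definition t_comp :: "nat list \<Rightarrow> fa" where
  "t_comp \<gamma> = wd (tword 0 \<gamma>)"

definition is_composition :: "nat \<Rightarrow> nat list \<Rightarrow> bool" where
  "is_composition n \<gamma> \<longleftrightarrow> (\<forall>g\<in>set \<gamma>. g > 0) \<and> sum_list \<gamma> = n"

end

theory Submission
  imports Defs
begin

text \<open>
  All identities are between words in the t(i) and hold up to sign. Conjugation by the cycle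
  word t(s+1) \<dots> t(s+k) shifts t(i) to t(i+1) inside the block s+1, \<dots>, s+k+1 and sends
  t(s+k) to a word for the transposition (s+1 s+k+1), which is in turn conjugate to t(s+1).
  Hence a suitable power of this cycle conjugates the word of a composition (a, b) of the
  block to \<plusminus> the word of (b, a), after commuting the two far-apart blocks it produces.
  Conjugate elements agree modulo [H,H], so adjacent parts of a composition can be swapped up
  to sign, giving t(\<gamma>) = \<plusminus>t(\<mu>) modulo [H,H]. If some part is even, \<gamma> has a prefix whose
  word P has odd length; as n - \<ell> is even, the complementary word Q has odd length too, so
  P Q = -Q P in H while P Q - Q P is a commutator, and hence P Q \<in> [H,H].
\<close>

lemma lookup_fscale [simp]: "Poly_Mapping.lookup (fscale c p) k = c * Poly_Mapping.lookup p k"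
  unfolding fscale_def by (simp add: Poly_Mapping.map.rep_eq when_def)

lemma lookup_wd: "Poly_Mapping.lookup (wd w) v = (if v = w then 1 else 0)"
  unfolding wd_def by (simp add: lookup_single when_def)

lemma keys_wd [simp]: "Poly_Mapping.keys (wd w) = {w}"
  unfolding wd_def by simp

lemma fscale_one [simp]: "fscale 1 x = x"
  by (intro poly_mapping_eqI) simp

lemma fscale_add: "fscale c (x + y) = fscale c x + fscale c y"
  by (intro poly_mapping_eqI) (simp add: lookup_add algebra_simps)

lemma diff_fscale_trans: "(x - fscale e y) + fscale e (y - fscale f z) = x - fscale (e * f) z"
  by (intro poly_mapping_eqI) (simp add: lookup_add lookup_minus algebra_simps)

lemma lookup_fmul_wd_left:
  "Poly_Mapping.lookup (fmul (wd p) x) w =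
     (if \<exists>v. w = p @ v then Poly_Mapping.lookup x (drop (length p) w) else 0)"
proof -
  have "Poly_Mapping.lookup (fmul (wd p) x) w =
      (\<Sum>v\<in>Poly_Mapping.keys x. if p @ v = w then Poly_Mapping.lookup x v else 0)"
    unfolding fmul_def by (simp add: lookup_sum lookup_single when_def lookup_wd)
  also have "\<dots> = (if \<exists>v. w = p @ v then Poly_Mapping.lookup x (drop (length p) w) else 0)"
  proof (cases "\<exists>v. w = p @ v")
    case True
    then obtain v where v: "w = p @ v" by blast
    have "(\<Sum>v'\<in>Poly_Mapping.keys x. if p @ v' = w then Poly_Mapping.lookup x v' else 0)
        = (\<Sum>v'\<in>Poly_Mapping.keys x. if v' = v then Poly_Mapping.lookup x v' else 0)"
      by (rule sum.cong) (auto simp: v)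
    also have "\<dots> = Poly_Mapping.lookup x v" by (auto simp: in_keys_iff)
    finally show ?thesis using v by simp
  qed (auto intro!: sum.neutral)
  finally show ?thesis .
qed

lemma lookup_fmul_wd_right:
  "Poly_Mapping.lookup (fmul x (wd q)) w =
     (if \<exists>u. w = u @ q then Poly_Mapping.lookup x (take (length w - length q) w) else 0)"
proof -
  have "Poly_Mapping.lookup (fmul x (wd q)) w =
      (\<Sum>u\<in>Poly_Mapping.keys x. if u @ q = w then Poly_Mapping.lookup x u else 0)"
    unfolding fmul_def by (simp add: lookup_sum lookup_single when_def lookup_wd)
  also have "\<dots> = (if \<exists>u. w = u @ q then Poly_Mapping.lookup x (take (length w - length q) w) else 0)"
  proof (cases "\<exists>u. w = u @ q")
    case True
    then obtain u where u: "w = u @ q" by blast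
    have "(\<Sum>u'\<in>Poly_Mapping.keys x. if u' @ q = w then Poly_Mapping.lookup x u' else 0)
        = (\<Sum>u'\<in>Poly_Mapping.keys x. if u' = u then Poly_Mapping.lookup x u' else 0)"
      by (rule sum.cong) (auto simp: u)
    also have "\<dots> = Poly_Mapping.lookup x u" by (auto simp: in_keys_iff)
    finally show ?thesis using u by simp
  qed (auto intro!: sum.neutral)
  finally show ?thesis .
qed

lemma fmul_wd_wd: "fmul (wd u) (wd v) = wd (u @ v)"
  by (rule poly_mapping_eqI) (auto simp: lookup_fmul_wd_left lookup_wd)

lemma fmul_wd_diff: "fmul (wd p) (wd u - fscale e (wd v)) = wd (p @ u) - fscale e (wd (p @ v))"
  by (rule poly_mapping_eqI) (auto simp: lookup_fmul_wd_left lookup_wd lookup_minus)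

lemma fmul_diff_wd: "fmul (wd u - fscale e (wd v)) (wd q) = wd (u @ q) - fscale e (wd (v @ q))"
  by (rule poly_mapping_eqI) (auto simp: lookup_fmul_wd_right lookup_wd lookup_minus)

lemma wd_in_free_alg: "set w \<subseteq> gens n \<Longrightarrow> wd w \<in> free_alg n"
  unfolding free_alg_def by simp

section \<open>Congruence modulo the defining relations\<close>

definition congr_rel :: "nat \<Rightarrow> complex \<Rightarrow> gen list \<Rightarrow> gen list \<Rightarrow> bool" where
  "congr_rel n e u v \<longleftrightarrow> wd u - fscale e (wd v) \<in> rel_ideal n"

lemma congr_rel_refl: "congr_rel n 1 u u"
  by (simp add: congr_rel_def rel_ideal.zero)

lemma congr_rel_sym:
  assumes "e \<in> {1, -1}" and "congr_rel n e u v"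
  shows "congr_rel n e v u"
proof -
  have "fscale (- e) (wd u - fscale e (wd v)) = wd v - fscale e (wd u)"
    using assms(1) by (intro poly_mapping_eqI) (auto simp: lookup_minus algebra_simps)
  then show ?thesis
    using assms(2) rel_ideal.scale unfolding congr_rel_def by metis
qed

lemma congr_rel_trans: "congr_rel n e u v \<Longrightarrow> congr_rel n f v w \<Longrightarrow> congr_rel n (e * f) u w"
  unfolding congr_rel_def by (metis diff_fscale_trans rel_ideal.add rel_ideal.scale)

lemma congr_rel_append_left:
  "congr_rel n e u v \<Longrightarrow> set p \<subseteq> gens n \<Longrightarrow> congr_rel n e (p @ u) (p @ v)"
  unfolding congr_rel_def by (metis fmul_wd_diff rel_ideal.lmul wd_in_free_alg)

lemma congr_rel_append_right:
  "congr_rel n e u v \<Longrightarrow> set q \<subseteq> gens n \<Longrightarrow> congr_rel n e (u @ q) (v @ q)"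
  unfolding congr_rel_def by (metis fmul_diff_wd rel_ideal.rmul wd_in_free_alg)

lemma congr_rel_of_relator: "wd u - fscale e (wd v) \<in> relators n \<Longrightarrow> congr_rel n e u v"
  by (simp add: congr_rel_def rel_ideal.rel)

definition t_word :: "nat \<Rightarrow> gen list \<Rightarrow> bool" where
  "t_word n w \<longleftrightarrow> (\<forall>x\<in>set w. \<exists>i. x = T i \<and> 1 \<le> i \<and> i < n)"

lemma t_word_simps [simp]:
  "t_word n []"
  "t_word n (x # w) \<longleftrightarrow> (\<exists>i. x = T i \<and> 1 \<le> i \<and> i < n) \<and> t_word n w"
  "t_word n (u @ v) \<longleftrightarrow> t_word n u \<and> t_word n v"
  "t_word n (rev w) \<longleftrightarrow> t_word n w"
  by (auto simp: t_word_def)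

lemma t_word_map_T [simp]: "t_word n (map T is) \<longleftrightarrow> (\<forall>i\<in>set is. 1 \<le> i \<and> i < n)"
  by (auto simp: t_word_def)

lemma set_subset_gens_if_t_word: "t_word n w \<Longrightarrow> set w \<subseteq> gens n"
  unfolding t_word_def gens_def by force

lemma congr_rel_context:
  "congr_rel n e u v \<Longrightarrow> t_word n p \<Longrightarrow> t_word n q
    \<Longrightarrow> congr_rel n e (p @ u @ q) (p @ v @ q)"
  by (metis congr_rel_append_left congr_rel_append_right set_subset_gens_if_t_word)

lemma congr_rel_T_square: "1 \<le> i \<Longrightarrow> i < n \<Longrightarrow> congr_rel n 1 [T i, T i] []"
  by (rule congr_rel_of_relator) (auto simp: relators_def)

lemma congr_rel_T_braid:
  "1 \<le> i \<Longrightarrow> i + 1 < n \<Longrightarrow> congr_rel n 1 [T i, T (i + 1), T i] [T (i + 1), T i, T (i + 1)]"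
  by (rule congr_rel_of_relator) (auto simp: relators_def)

lemma congr_rel_T_far_square:
  assumes "1 \<le> i" "i < n" "1 \<le> j" "j < n" "j + 1 < i \<or> i + 1 < j"
  shows "congr_rel n (-1) [T i, T j, T i, T j] []"
proof (rule congr_rel_of_relator)
  have "wd [T i, T j, T i, T j] - fscale (-1) (wd []) = wd [T i, T j, T i, T j] + wd []"
    by (intro poly_mapping_eqI) (simp add: lookup_add lookup_minus)
  moreover have "wd [T i, T j, T i, T j] + wd [] \<in> relators n"
    unfolding relators_def by (intro UnI1 UnI2 CollectI exI[of _ i] exI[of _ j]) (use assms in auto)
  ultimately show "wd [T i, T j, T i, T j] - fscale (-1) (wd []) \<in> relators n"
    by metis
qed

lemma congr_rel_T_anticommute:
  assumes "1 \<le> i" "i < n" "1 \<le> j" "j < n" "j + 1 < i \<or> i + 1 < j"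
  shows "congr_rel n (-1) [T i, T j] [T j, T i]"
proof -
  \<comment> \<open>t(i) t(j) = (t(i) t(j))^2 t(j) t(i) = -t(j) t(i)\<close>
  have "congr_rel n 1 ([T i, T j, T i] @ [T j, T j] @ [T i]) ([T i, T j, T i] @ [] @ [T i])"
    using assms by (intro congr_rel_context congr_rel_T_square) auto
  moreover have "congr_rel n 1 ([T i, T j] @ [T i, T i] @ []) ([T i, T j] @ [] @ [])"
    using assms by (intro congr_rel_context congr_rel_T_square) auto
  ultimately have "congr_rel n 1 [T i, T j, T i, T j, T j, T i] [T i, T j]"
    using congr_rel_trans[of n 1] by fastforce
  then have "congr_rel n 1 [T i, T j] ([] @ [T i, T j, T i, T j] @ [T j, T i])"
    using congr_rel_sym[of 1] by simp
  moreover have "congr_rel n (-1) ([] @ [T i, T j, T i, T j] @ [T j, T i]) ([] @ [] @ [T j, T i])"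
    using assms by (intro congr_rel_context congr_rel_T_far_square) auto
  ultimately show ?thesis
    using congr_rel_trans[of n 1] by fastforce
qed

definition far_apart :: "gen list \<Rightarrow> gen list \<Rightarrow> bool" where
  "far_apart u v \<longleftrightarrow>
     (\<forall>i j. T i \<in> set u \<longrightarrow> T j \<in> set v \<longrightarrow> j + 1 < i \<or> i + 1 < j)"

lemma congr_rel_letter_commute:
  "t_word n w \<Longrightarrow> 1 \<le> i \<Longrightarrow> i < n \<Longrightarrow> far_apart [T i] w
    \<Longrightarrow> congr_rel n ((-1) ^ length w) (T i # w) (w @ [T i])"
proof (induction w)
  case Nil
  then show ?case by (simp add: congr_rel_refl)
next
  case (Cons x w)
  then obtain j where x: "x = T j" "1 \<le> j" "j < n" by auto
  have "congr_rel n (-1) ([] @ [T i, T j] @ w) ([] @ [T j, T i] @ w)"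
    using Cons.prems x by (intro congr_rel_context congr_rel_T_anticommute) (auto simp: far_apart_def)
  moreover have "congr_rel n ((-1) ^ length w) ([T j] @ (T i # w) @ []) ([T j] @ (w @ [T i]) @ [])"
    using Cons x by (intro congr_rel_context) (auto simp: far_apart_def)
  ultimately show ?case
    using congr_rel_trans x by fastforce
qed

lemma congr_rel_far_commute:
  "t_word n u \<Longrightarrow> t_word n v \<Longrightarrow> far_apart u v
    \<Longrightarrow> congr_rel n ((-1) ^ (length u * length v)) (u @ v) (v @ u)"
proof (induction u)
  case Nil
  then show ?case by (simp add: congr_rel_refl)
next
  case (Cons x u)
  then obtain i where x: "x = T i" "1 \<le> i" "i < n" by auto
  have "congr_rel n ((-1) ^ (length u * length v)) ([T i] @ (u @ v) @ []) ([T i] @ (v @ u) @ [])"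
    using Cons x by (intro congr_rel_context) (auto simp: far_apart_def)
  moreover have "congr_rel n ((-1) ^ length v) ([] @ (T i # v) @ u) ([] @ (v @ [T i]) @ u)"
    using Cons.prems x by (intro congr_rel_context congr_rel_letter_commute) (auto simp: far_apart_def)
  ultimately show ?case
    using congr_rel_trans[of n _ "T i # u @ v" "T i # v @ u"] x by (fastforce simp: power_add mult.commute)
qed

lemma congr_rel_rev_append: "t_word n w \<Longrightarrow> congr_rel n 1 (rev w @ w) []"
proof (induction w)
  case Nil
  then show ?case by (simp add: congr_rel_refl)
next
  case (Cons x w)
  then obtain i where x: "x = T i" "1 \<le> i" "i < n" by auto
  have "congr_rel n 1 (rev w @ [T i, T i] @ w) (rev w @ [] @ w)"
    using Cons.prems x by (intro congr_rel_context congr_rel_T_square) auto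
  with Cons x show ?case
    using congr_rel_trans by fastforce
qed

lemma congr_rel_append_rev: "t_word n w \<Longrightarrow> congr_rel n 1 (w @ rev w) []"
  using congr_rel_rev_append[of n "rev w"] by simp

lemma sign_mult: "e \<in> {1, -1 :: complex} \<Longrightarrow> f \<in> {1, -1} \<Longrightarrow> e * f \<in> {1, -1}"
  by auto

lemma minus_one_power_sign: "(-1 :: complex) ^ k \<in> {1, -1}"
  by (induction k) auto

definition congr_rel_pm :: "nat \<Rightarrow> gen list \<Rightarrow> gen list \<Rightarrow> bool" where
  "congr_rel_pm n u v \<longleftrightarrow> (\<exists>e\<in>{1, -1}. congr_rel n e u v)"

lemma congr_rel_pm_of_congr_rel: "e \<in> {1, -1} \<Longrightarrow> congr_rel n e u v \<Longrightarrow> congr_rel_pm n u v"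
  unfolding congr_rel_pm_def by blast

lemma congr_rel_pm_refl: "congr_rel_pm n u u"
  using congr_rel_refl congr_rel_pm_of_congr_rel by blast

lemma congr_rel_pm_sym: "congr_rel_pm n u v \<Longrightarrow> congr_rel_pm n v u"
  unfolding congr_rel_pm_def using congr_rel_sym by blast

lemma congr_rel_pm_trans [trans]:
  "congr_rel_pm n u v \<Longrightarrow> congr_rel_pm n v w \<Longrightarrow> congr_rel_pm n u w"
  unfolding congr_rel_pm_def using congr_rel_trans sign_mult by blast

lemma congr_rel_pm_context:
  "congr_rel_pm n u v \<Longrightarrow> t_word n p \<Longrightarrow> t_word n q
    \<Longrightarrow> congr_rel_pm n (p @ u @ q) (p @ v @ q)"
  unfolding congr_rel_pm_def using congr_rel_context by blast

lemma congr_rel_pm_append_left: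
  "congr_rel_pm n u v \<Longrightarrow> t_word n p \<Longrightarrow> congr_rel_pm n (p @ u) (p @ v)"
  using congr_rel_pm_context[of n u v p "[]"] by simp

lemma congr_rel_pm_append_right:
  "congr_rel_pm n u v \<Longrightarrow> t_word n q \<Longrightarrow> congr_rel_pm n (u @ q) (v @ q)"
  using congr_rel_pm_context[of n u v "[]" q] by simp

lemma congr_rel_pm_far_commute:
  "t_word n u \<Longrightarrow> t_word n v \<Longrightarrow> far_apart u v \<Longrightarrow> congr_rel_pm n (u @ v) (v @ u)"
  using congr_rel_far_commute congr_rel_pm_of_congr_rel minus_one_power_sign by blast

text \<open>Since every t-word W is invertible, conjugates n W x y says that W x W\<inverse> = \<plusminus>y in H.\<close>

definition conjugates :: "nat \<Rightarrow> gen list \<Rightarrow> gen list \<Rightarrow> gen list \<Rightarrow> bool" where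
  "conjugates n W x y \<longleftrightarrow> congr_rel_pm n (W @ x) (y @ W)"

lemma conjugates_Nil: "conjugates n W [] []"
  by (simp add: conjugates_def congr_rel_pm_refl)

lemma conjugates_compose:
  assumes "t_word n W\<^sub>1" "t_word n W\<^sub>2" "conjugates n W\<^sub>1 x y" "conjugates n W\<^sub>2 y z"
  shows "conjugates n (W\<^sub>2 @ W\<^sub>1) x z"
proof -
  have "congr_rel_pm n (W\<^sub>2 @ (W\<^sub>1 @ x) @ []) (W\<^sub>2 @ (y @ W\<^sub>1) @ [])"
    using assms by (intro congr_rel_pm_context) (auto simp: conjugates_def)
  moreover have "congr_rel_pm n ([] @ (W\<^sub>2 @ y) @ W\<^sub>1) ([] @ (z @ W\<^sub>2) @ W\<^sub>1)"
    using assms by (intro congr_rel_pm_context) (auto simp: conjugates_def)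
  ultimately show ?thesis
    unfolding conjugates_def using congr_rel_pm_trans by fastforce
qed

lemma conjugates_append:
  assumes "t_word n x'" "t_word n y" "conjugates n W x y" "conjugates n W x' y'"
  shows "conjugates n W (x @ x') (y @ y')"
proof -
  have "congr_rel_pm n ([] @ (W @ x) @ x') ([] @ (y @ W) @ x')"
    using assms by (intro congr_rel_pm_context) (auto simp: conjugates_def)
  moreover have "congr_rel_pm n (y @ (W @ x') @ []) (y @ (y' @ W) @ [])"
    using assms by (intro congr_rel_pm_context) (auto simp: conjugates_def)
  ultimately show ?thesis
    unfolding conjugates_def using congr_rel_pm_trans by fastforce
qed

lemma conjugates_map:
  assumes "\<forall>j\<in>set js. 1 \<le> g j \<and> g j < n \<and> 1 \<le> h j \<and> h j < n
             \<and> conjugates n W [T (g j)] [T (h j)]"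
  shows "conjugates n W (map (\<lambda>j. T (g j)) js) (map (\<lambda>j. T (h j)) js)"
  using assms
proof (induction js)
  case Nil
  then show ?case by (simp add: conjugates_Nil)
next
  case (Cons j js)
  moreover have "t_word n (map (\<lambda>j. T (g j)) js)"
    using Cons.prems by (auto simp: t_word_def)
  ultimately show ?case
    using conjugates_append[of n "map (\<lambda>j. T (g j)) js" "[T (h j)]" W "[T (g j)]"] by auto
qed

lemma conjugates_far_apart:
  "t_word n W \<Longrightarrow> t_word n x \<Longrightarrow> far_apart W x \<Longrightarrow> conjugates n W x x"
  unfolding conjugates_def by (rule congr_rel_pm_far_commute)

section \<open>Congruence modulo commutators\<close>

lemma in_commutator_H_of_rel_ideal: "x \<in> rel_ideal n \<Longrightarrow> in_commutator_H n x"
  unfolding in_commutator_H_def by (rule bexI[of _ 0]) (auto intro: comm_span.zero)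

lemma in_commutator_H_of_comm_span: "x \<in> comm_span n \<Longrightarrow> in_commutator_H n x"
  unfolding in_commutator_H_def by (rule bexI[of _ x]) (auto intro: rel_ideal.zero)

lemma in_commutator_H_add:
  assumes "in_commutator_H n x" "in_commutator_H n y"
  shows "in_commutator_H n (x + y)"
proof -
  obtain c i c' i' where "c \<in> comm_span n" "i \<in> rel_ideal n" "x = c + i"
    and "c' \<in> comm_span n" "i' \<in> rel_ideal n" "y = c' + i'"
    using assms unfolding in_commutator_H_def by blast
  moreover have "c + i + (c' + i') = (c + c') + (i + i')"
    by (simp add: algebra_simps)
  ultimately show ?thesis
    unfolding in_commutator_H_def by (metis comm_span.add rel_ideal.add)
qed

lemma in_commutator_H_fscale: "in_commutator_H n x \<Longrightarrow> in_commutator_H n (fscale c x)"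
  unfolding in_commutator_H_def by (metis fscale_add comm_span.scale rel_ideal.scale)

definition congr_trace :: "nat \<Rightarrow> complex \<Rightarrow> gen list \<Rightarrow> gen list \<Rightarrow> bool" where
  "congr_trace n e u v \<longleftrightarrow> in_commutator_H n (wd u - fscale e (wd v))"

lemma congr_trace_of_congr_rel: "congr_rel n e u v \<Longrightarrow> congr_trace n e u v"
  by (simp add: congr_rel_def congr_trace_def in_commutator_H_of_rel_ideal)

lemma congr_trace_trans:
  "congr_trace n e u v \<Longrightarrow> congr_trace n f v w \<Longrightarrow> congr_trace n (e * f) u w"
  unfolding congr_trace_def by (metis diff_fscale_trans in_commutator_H_add in_commutator_H_fscale)

lemma congr_trace_rotate: "t_word n u \<Longrightarrow> t_word n v \<Longrightarrow> congr_trace n 1 (u @ v) (v @ u)"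
  unfolding congr_trace_def
  by (metis comm_span.comm fmul_wd_wd fscale_one in_commutator_H_of_comm_span
      set_subset_gens_if_t_word wd_in_free_alg)

lemma in_commutator_H_of_anticommute:
  assumes "t_word n u" "t_word n v" "congr_rel n (-1) (u @ v) (v @ u)"
  shows "in_commutator_H n (wd (u @ v))"
proof -
  have "in_commutator_H n (fscale (1/2)
          ((wd (u @ v) - fscale (-1) (wd (v @ u))) + (wd (u @ v) - fscale 1 (wd (v @ u)))))"
    using assms congr_trace_of_congr_rel congr_trace_rotate
    unfolding congr_trace_def by (blast intro: in_commutator_H_fscale in_commutator_H_add)
  moreover have "fscale (1/2) ((wd (u @ v) - fscale (-1) (wd (v @ u)))
                   + (wd (u @ v) - fscale 1 (wd (v @ u)))) = wd (u @ v)"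
    by (intro poly_mapping_eqI) (simp add: lookup_add lookup_minus)
  ultimately show ?thesis by simp
qed

definition congr_trace_pm :: "nat \<Rightarrow> gen list \<Rightarrow> gen list \<Rightarrow> bool" where
  "congr_trace_pm n u v \<longleftrightarrow> (\<exists>e\<in>{1, -1}. congr_trace n e u v)"

lemma congr_trace_pm_refl: "congr_trace_pm n u u"
  unfolding congr_trace_pm_def using congr_trace_of_congr_rel[OF congr_rel_refl] by auto

lemma congr_trace_pm_trans [trans]:
  "congr_trace_pm n u v \<Longrightarrow> congr_trace_pm n v w \<Longrightarrow> congr_trace_pm n u w"
  unfolding congr_trace_pm_def using congr_trace_trans sign_mult by blast

lemma congr_trace_pm_of_congr_rel_pm: "congr_rel_pm n u v \<Longrightarrow> congr_trace_pm n u v"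
  unfolding congr_trace_pm_def congr_rel_pm_def using congr_trace_of_congr_rel by blast

text \<open>Conjugate elements agree modulo commutators: x \<equiv> W\<inverse> W x \<equiv> W x W\<inverse> = \<plusminus>y.\<close>

lemma congr_trace_pm_of_conjugates:
  assumes "t_word n W" "t_word n x" "t_word n y" "conjugates n W x y"
  shows "congr_trace_pm n x y"
proof -
  have "congr_rel n 1 ([] @ (rev W @ W) @ x) ([] @ [] @ x)"
    using assms by (intro congr_rel_context congr_rel_rev_append) auto
  then have "congr_trace n 1 x (rev W @ W @ x)"
    using congr_rel_sym[of 1] congr_trace_of_congr_rel by fastforce
  moreover have "congr_trace n 1 (rev W @ (W @ x)) ((W @ x) @ rev W)"
    using assms by (intro congr_trace_rotate) auto
  ultimately have "congr_trace_pm n x (W @ x @ rev W)"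
    unfolding congr_trace_pm_def using congr_trace_trans[of n 1 _ _ 1] by fastforce
  also have "congr_trace_pm n \<dots> (y @ W @ rev W)"
    using congr_rel_pm_append_right[OF assms(4)[unfolded conjugates_def], of "rev W"] assms(1)
    by (simp add: congr_trace_pm_of_congr_rel_pm)
  also have "congr_trace_pm n \<dots> y"
    using congr_trace_pm_of_congr_rel_pm[OF congr_rel_pm_of_congr_rel[OF _
          congr_rel_context[OF congr_rel_append_rev[OF assms(1)] assms(3), of "[]"]]]
    by simp
  finally show ?thesis .
qed

section \<open>Conjugation by cycles\<close>

text \<open>The word t(s+1) \<dots> t(s+k) represents, up to sign, the cycle (s+1 \<dots> s+k+1).\<close>

definition cycle_word :: "nat \<Rightarrow> nat \<Rightarrow> gen list" where
  "cycle_word s k = map T [s + 1..<s + k + 1]"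

lemma t_word_cycle_word: "s + k < n \<Longrightarrow> t_word n (cycle_word s k)"
  unfolding cycle_word_def by auto

lemma T_in_cycle_word_iff: "T i \<in> set (cycle_word s k) \<longleftrightarrow> s + 1 \<le> i \<and> i \<le> s + k"
  unfolding cycle_word_def by auto

lemma cycle_word_Suc: "cycle_word s (Suc k) = cycle_word s k @ [T (s + Suc k)]"
  unfolding cycle_word_def by simp

lemma conjugates_cycle_word_shift:
  assumes "s + k < n" "s + 1 \<le> i" "i + 1 \<le> s + k"
  shows "conjugates n (cycle_word s k) [T i] [T (i + 1)]"
proof -
  define A where "A = map T [s + 1..<i]"
  define B where "B = map T [i + 2..<s + k + 1]"
  have "[s + 1..<s + k + 1] = [s + 1..<i] @ [i..<i + (s + k + 1 - i)]"
    using upt_add_eq_append[of "s + 1" i "s + k + 1 - i"] assms by simp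
  also have "[i..<i + (s + k + 1 - i)] = i # (i + 1) # [i + 2..<s + k + 1]"
    using assms by (simp add: upt_conv_Cons)
  finally have cycle: "cycle_word s k = A @ [T i, T (i + 1)] @ B"
    unfolding cycle_word_def A_def B_def by simp
  have A: "t_word n A" and B: "t_word n B"
    using assms by (auto simp: A_def B_def)
  have far_B: "far_apart B [T i]" and far_A: "far_apart A [T (i + 1)]"
    by (auto simp: far_apart_def A_def B_def)
  have "congr_rel_pm n (cycle_word s k @ [T i]) (A @ [T i, T (i + 1), T i] @ B)"
    using congr_rel_pm_append_left[OF congr_rel_pm_far_commute[OF B _ far_B],
        of "A @ [T i, T (i + 1)]"] A B assms
    by (simp add: cycle)
  also have "congr_rel_pm n \<dots> (A @ [T (i + 1), T i, T (i + 1)] @ B)"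
    using congr_rel_pm_context[OF congr_rel_pm_of_congr_rel[OF _ congr_rel_T_braid[of i n]] A B]
      assms by simp
  also have "congr_rel_pm n \<dots> ([T (i + 1)] @ cycle_word s k)"
    using congr_rel_pm_append_right[OF congr_rel_pm_far_commute[OF A _ far_A],
        of "[T i, T (i + 1)] @ B"] A B assms
    by (simp add: cycle)
  finally show ?thesis
    unfolding conjugates_def .
qed

definition cycle_pow :: "nat \<Rightarrow> nat \<Rightarrow> nat \<Rightarrow> gen list" where
  "cycle_pow s k j = concat (replicate j (cycle_word s k))"

lemma t_word_cycle_pow: "s + k < n \<Longrightarrow> t_word n (cycle_pow s k j)"
  unfolding cycle_pow_def using t_word_cycle_word[of s k n] by (induction j) auto

lemma cycle_pow_Suc: "cycle_pow s k (Suc j) = cycle_word s k @ cycle_pow s k j"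
  unfolding cycle_pow_def by simp

lemma cycle_pow_add: "cycle_pow s k (i + j) = cycle_pow s k i @ cycle_pow s k j"
  unfolding cycle_pow_def by (simp add: replicate_add)

lemma conjugates_cycle_pow_shift:
  "s + k < n \<Longrightarrow> s + 1 \<le> i \<Longrightarrow> i + j \<le> s + k
    \<Longrightarrow> conjugates n (cycle_pow s k j) [T i] [T (i + j)]"
proof (induction j)
  case 0
  then show ?case by (simp add: conjugates_def cycle_pow_def congr_rel_pm_refl)
next
  case (Suc j)
  then have "conjugates n (cycle_word s k @ cycle_pow s k j) [T i] [T (i + j + 1)]"
    by (intro conjugates_compose[where y = "[T (i + j)]"] conjugates_cycle_word_shift
        t_word_cycle_word t_word_cycle_pow) auto
  then show ?case by (simp add: cycle_pow_Suc)
qed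

text \<open>Both words represent, up to sign, the transposition (s+1 s+k+1).\<close>

definition conj_first :: "nat \<Rightarrow> nat \<Rightarrow> gen list" where
  "conj_first s k = rev (cycle_word s k) @ [T (s + 1)] @ cycle_word s k"

definition conj_last :: "nat \<Rightarrow> nat \<Rightarrow> gen list" where
  "conj_last s k = cycle_word s (k - 1) @ [T (s + k)] @ rev (cycle_word s (k - 1))"

lemma conj_first_Suc:
  "conj_first s (Suc k) = [T (s + Suc k)] @ conj_first s k @ [T (s + Suc k)]"
  unfolding conj_first_def by (simp add: cycle_word_Suc)

lemma conj_last_Suc:
  "1 \<le> k \<Longrightarrow> conj_last s (Suc k) = cycle_word s (k - 1) @ [T (s + k), T (s + Suc k), T (s + k)]
     @ rev (cycle_word s (k - 1))"
  unfolding conj_last_def using cycle_word_Suc[of s "k - 1"] by simp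

lemma congr_rel_pm_conj_first_conj_last:
  "1 \<le> k \<Longrightarrow> s + k < n \<Longrightarrow> congr_rel_pm n (conj_first s k) (conj_last s k)"
proof (induction k rule: nat_induct_at_least)
  case base
  have "congr_rel_pm n ([] @ [T (s + 1), T (s + 1)] @ [T (s + 1)]) ([] @ [] @ [T (s + 1)])"
    using base by (intro congr_rel_pm_context congr_rel_pm_of_congr_rel[of 1] congr_rel_T_square) auto
  then show ?case by (simp add: conj_first_def conj_last_def cycle_word_def)
next
  case (Suc k)
  define c where "c = cycle_word s (k - 1)"
  let ?t = "T (s + Suc k)" and ?u = "T (s + k)"
  have c: "t_word n c" and t: "t_word n [?t]" and u: "t_word n [?u]"
    using Suc unfolding c_def by (auto simp: t_word_cycle_word)
  have far: "far_apart [?t] c" "far_apart (rev c) [?t]"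
    unfolding c_def far_apart_def by (auto simp: T_in_cycle_word_iff)
  have "congr_rel_pm n (conj_first s k) (conj_last s k)"
    using Suc by simp
  from congr_rel_pm_context[OF this t t]
  have "congr_rel_pm n (conj_first s (Suc k)) ([?t] @ (c @ [?u] @ rev c) @ [?t])"
    by (simp add: conj_first_Suc conj_last_def c_def)
  also have "congr_rel_pm n \<dots> (c @ [?t, ?u] @ rev c @ [?t])"
    using congr_rel_pm_append_right[OF congr_rel_pm_far_commute[OF t c far(1)], of "[?u] @ rev c @ [?t]"]
      c u Suc.prems by simp
  also have "congr_rel_pm n \<dots> (c @ [?t, ?u, ?t] @ rev c)"
    using congr_rel_pm_append_left[OF congr_rel_pm_far_commute[OF _ t far(2)], of "c @ [?t, ?u]"]
      c t u by simp
  also have "congr_rel_pm n \<dots> (conj_last s (Suc k))"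
    using congr_rel_pm_sym[OF congr_rel_pm_context[OF
          congr_rel_pm_of_congr_rel[OF _ congr_rel_T_braid[of "s + k" n]] c, of "rev c"]] c Suc
    by (simp add: conj_last_Suc c_def)
  finally show ?case .
qed

lemma conjugates_cycle_word_last:
  assumes "1 \<le> k" "s + k < n"
  shows "conjugates n (cycle_word s k) [T (s + k)] (conj_last s k)"
proof -
  define c where "c = cycle_word s (k - 1)"
  have c: "t_word n c" and t: "t_word n [T (s + k)]"
    using assms unfolding c_def by (auto simp: t_word_cycle_word)
  have cycle: "cycle_word s k = c @ [T (s + k)]"
    using assms cycle_word_Suc[of s "k - 1"] by (simp add: c_def)
  have last: "conj_last s k = c @ [T (s + k)] @ rev c"
    by (simp add: conj_last_def c_def)
  have square: "congr_rel_pm n (c @ [T (s + k), T (s + k)]) c"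
    using congr_rel_pm_context[OF congr_rel_pm_of_congr_rel[OF _ congr_rel_T_square[of "s + k" n]] c,
        of "[]"] assms by simp
  have cancel: "congr_rel_pm n (conj_last s k @ cycle_word s k) (c @ [T (s + k), T (s + k)])"
    using congr_rel_pm_context[OF congr_rel_pm_of_congr_rel[OF _ congr_rel_rev_append[OF c]],
        of "c @ [T (s + k)]" "[T (s + k)]"] c t by (simp add: last cycle)
  have "congr_rel_pm n (cycle_word s k @ [T (s + k)]) c"
    using square by (simp add: cycle)
  also have "congr_rel_pm n c (conj_last s k @ cycle_word s k)"
    using congr_rel_pm_sym[OF congr_rel_pm_trans[OF cancel square]] .
  finally show ?thesis
    unfolding conjugates_def .
qed

lemma conjugates_cycle_word_wrap:
  assumes "1 \<le> k" "s + k < n"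
  shows "conjugates n (cycle_word s k) (conj_last s k) [T (s + 1)]"
proof -
  have c: "t_word n (cycle_word s k)" and t: "t_word n [T (s + 1)]"
    using assms by (auto simp: t_word_cycle_word)
  have "congr_rel_pm n (cycle_word s k @ conj_last s k) (cycle_word s k @ conj_first s k)"
    using congr_rel_pm_append_left[OF congr_rel_pm_sym[OF congr_rel_pm_conj_first_conj_last[OF assms]] c] .
  also have "congr_rel_pm n \<dots> ([T (s + 1)] @ cycle_word s k)"
    using congr_rel_pm_context[OF congr_rel_pm_of_congr_rel[OF _ congr_rel_append_rev[OF c]],
        of "[]" "[T (s + 1)] @ cycle_word s k"] c t
    by (simp add: conj_first_def)
  finally show ?thesis
    unfolding conjugates_def .
qed

lemma conjugates_cycle_pow_wrap:
  assumes "1 \<le> r" "r + 1 \<le> b" "a + b = k + 1" "s + k < n" "1 \<le> a"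
  shows "conjugates n (cycle_pow s k b) [T (s + a + r)] [T (s + r)]"
proof -
  have c: "t_word n (cycle_word s k)" and p: "t_word n (cycle_pow s k j)" for j
    using assms t_word_cycle_word t_word_cycle_pow by auto
  have "s + a + r + (b - 1 - r) = s + k"
    using assms by simp
  then have "conjugates n (cycle_pow s k (b - 1 - r)) [T (s + a + r)] [T (s + k)]"
    using assms conjugates_cycle_pow_shift[of s k n "s + a + r" "b - 1 - r"] by simp
  then have "conjugates n (cycle_word s k @ cycle_pow s k (b - 1 - r)) [T (s + a + r)] (conj_last s k)"
    using conjugates_compose[OF p c _ conjugates_cycle_word_last] assms by simp
  then have "conjugates n (cycle_word s k @ cycle_word s k @ cycle_pow s k (b - 1 - r))
               [T (s + a + r)] [T (s + 1)]"
    using conjugates_compose[OF _ c _ conjugates_cycle_word_wrap] p c assms by simp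
  moreover have "conjugates n (cycle_pow s k (r - 1)) [T (s + 1)] [T (s + r)]"
    using assms conjugates_cycle_pow_shift[of s k n "s + 1" "r - 1"] by simp
  ultimately have "conjugates n (cycle_pow s k (r - 1) @ cycle_word s k @ cycle_word s k
                     @ cycle_pow s k (b - 1 - r)) [T (s + a + r)] [T (s + r)]"
    using conjugates_compose p c by simp
  moreover have "b = (r - 1) + Suc (Suc (b - 1 - r))"
    using assms by linarith
  then have "cycle_pow s k b
      = cycle_pow s k (r - 1) @ cycle_word s k @ cycle_word s k @ cycle_pow s k (b - 1 - r)"
    by (metis cycle_pow_add cycle_pow_Suc)
  ultimately show ?thesis by simp
qed

section \<open>Reordering the parts of a composition\<close>

lemma tword_append: "tword a (xs @ ys) = tword a xs @ tword (a + sum_list xs) ys"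
  by (induction xs arbitrary: a) (auto simp: add.assoc)

lemma T_in_tword: "x \<in> set (tword a xs) \<Longrightarrow> \<exists>i. x = T i \<and> a < i \<and> i < a + sum_list xs"
  by (induction xs arbitrary: a) (fastforce simp: add.assoc)+

lemma length_tword: "\<forall>g\<in>set xs. 0 < g \<Longrightarrow> length (tword a xs) + length xs = sum_list xs"
  by (induction xs arbitrary: a) auto

lemma t_word_tword: "a + sum_list xs \<le> n \<Longrightarrow> t_word n (tword a xs)"
  unfolding t_word_def using T_in_tword by fastforce

lemma far_apart_tword:
  assumes "a + sum_list xs \<le> b"
  shows "far_apart (tword a xs) (tword b ys)"
  unfolding far_apart_def
proof (intro allI impI)
  fix i j
  assume "T i \<in> set (tword a xs)" "T j \<in> set (tword b ys)"
  with T_in_tword[OF this(1)] T_in_tword[OF this(2)] show "j + 1 < i \<or> i + 1 < j"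
    using assms by auto
qed

lemma map_T_add_upt: "map (\<lambda>i. T (i + d)) [i..<j] = map T [i + d..<j + d]"
  by (induction j) auto

lemma conjugates_block_up:
  assumes "1 \<le> a" "1 \<le> b" "s + a + b \<le> n"
  shows "conjugates n (cycle_pow s (a + b - 1) b)
           (map T [s + 1..<s + a]) (map T [s + b + 1..<s + a + b])"
proof -
  have "conjugates n (cycle_pow s (a + b - 1) b) (map (\<lambda>i. T i) [s + 1..<s + a])
          (map (\<lambda>i. T (i + b)) [s + 1..<s + a])"
    using assms by (intro conjugates_map ballI conjI conjugates_cycle_pow_shift) auto
  moreover have "map (\<lambda>i. T (i + b)) [s + 1..<s + a] = map T [s + b + 1..<s + a + b]"
    using map_T_add_upt[of b "s + 1" "s + a"] by (simp add: add_ac)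
  ultimately show ?thesis by simp
qed

lemma conjugates_block_down:
  assumes "1 \<le> a" "1 \<le> b" "s + a + b \<le> n"
  shows "conjugates n (cycle_pow s (a + b - 1) b)
           (map T [s + a + 1..<s + a + b]) (map T [s + 1..<s + b])"
proof -
  have "conjugates n (cycle_pow s (a + b - 1) b) (map (\<lambda>i. T (i + a)) [s + 1..<s + b])
          (map (\<lambda>i. T i) [s + 1..<s + b])"
  proof (intro conjugates_map ballI conjI)
    fix i assume "i \<in> set [s + 1..<s + b]"
    then have "conjugates n (cycle_pow s (a + b - 1) b) [T (s + a + (i - s))] [T (s + (i - s))]"
      using assms by (intro conjugates_cycle_pow_wrap) auto
    then show "conjugates n (cycle_pow s (a + b - 1) b) [T (i + a)] [T i]"
      using \<open>i \<in> set [s + 1..<s + b]\<close> by (simp add: add_ac)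
  qed (use assms in auto)
  moreover have "map (\<lambda>i. T (i + a)) [s + 1..<s + b] = map T [s + a + 1..<s + a + b]"
    using map_T_add_upt[of a "s + 1" "s + b"] by (simp add: add_ac)
  ultimately show ?thesis by simp
qed

text \<open>With W the b-th power of the cycle on s+1, \<dots>, s+a+b, conjugation by W shifts the
  block of t(i) coming from the part a up by b and the block coming from b down by a, and fixes
  all letters outside.\<close>

lemma congr_trace_pm_swap:
  assumes pos: "\<forall>g\<in>set (xs @ [a, b] @ ys). 0 < g" and sum: "sum_list (xs @ [a, b] @ ys) = n"
  shows "congr_trace_pm n (tword 0 (xs @ [a, b] @ ys)) (tword 0 (xs @ [b, a] @ ys))"
proof -
  define s where "s = sum_list xs"
  define W where "W = cycle_pow s (a + b - 1) b"
  define P where "P = tword 0 xs"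
  define Q where "Q = tword (s + a + b) ys"
  define X where "X = map T [s + 1..<s + a]"
  define X' where "X' = map T [s + b + 1..<s + a + b]"
  define Y where "Y = map T [s + a + 1..<s + a + b]"
  define Y' where "Y' = map T [s + 1..<s + b]"
  have a: "1 \<le> a" and b: "1 \<le> b" and n: "s + a + b + sum_list ys = n"
    using pos sum by (auto simp: s_def)
  have ab: "tword 0 (xs @ [a, b] @ ys) = P @ X @ Y @ Q"
    by (simp add: tword_append P_def Q_def X_def Y_def s_def add_ac)
  have ba: "tword 0 (xs @ [b, a] @ ys) = P @ Y' @ X' @ Q"
    by (simp add: tword_append P_def Q_def X'_def Y'_def s_def add_ac)
  have W: "t_word n W"
    unfolding W_def using a b n by (intro t_word_cycle_pow) simp
  have words: "t_word n P" "t_word n Q" "t_word n X" "t_word n X'" "t_word n Y" "t_word n Y'"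
    using a b n by (auto simp: P_def Q_def X_def X'_def Y_def Y'_def s_def intro!: t_word_tword)
  have W_letters: "T i \<in> set W \<Longrightarrow> s + 1 \<le> i \<and> i \<le> s + a + b - 1" for i
    unfolding W_def cycle_pow_def using T_in_cycle_word_iff by auto
  have far: "far_apart X' Y'"
    by (auto simp: far_apart_def X'_def Y'_def)
  have "far_apart W P" "far_apart W Q"
    using a b W_letters T_in_tword unfolding far_apart_def P_def Q_def s_def by fastforce+
  then have "conjugates n W P P" "conjugates n W Q Q"
    using W words conjugates_far_apart by auto
  moreover have "conjugates n W X X'" "conjugates n W Y Y'"
    using a b n conjugates_block_up conjugates_block_down
    unfolding W_def X_def X'_def Y_def Y'_def by auto
  ultimately have "conjugates n W (P @ X @ Y @ Q) (P @ X' @ Y' @ Q)"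
    using words by (intro conjugates_append) auto
  then have "congr_trace_pm n (P @ X @ Y @ Q) (P @ X' @ Y' @ Q)"
    using W words by (intro congr_trace_pm_of_conjugates) auto
  also have "congr_trace_pm n \<dots> (P @ Y' @ X' @ Q)"
    using congr_trace_pm_of_congr_rel_pm[OF congr_rel_pm_context[OF
          congr_rel_pm_far_commute[OF words(4) words(6) far] words(1,2)]] by simp
  finally show ?thesis
    unfolding ab ba .
qed

lemma congr_trace_pm_move:
  "\<forall>g\<in>set (pre @ a # xs @ ys). 0 < g \<Longrightarrow> sum_list (pre @ a # xs @ ys) = n
    \<Longrightarrow> congr_trace_pm n (tword 0 (pre @ a # xs @ ys)) (tword 0 (pre @ xs @ a # ys))"
proof (induction xs arbitrary: pre)
  case Nil
  then show ?case by (simp add: congr_trace_pm_refl)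
next
  case (Cons x xs)
  have "congr_trace_pm n (tword 0 (pre @ a # x # xs @ ys)) (tword 0 (pre @ x # a # xs @ ys))"
    using congr_trace_pm_swap[of pre a x "xs @ ys" n] Cons.prems by simp
  also have "congr_trace_pm n \<dots> (tword 0 (pre @ x # xs @ a # ys))"
    using Cons.IH[of "pre @ [x]"] Cons.prems by simp
  finally show ?case by simp
qed

lemma congr_trace_pm_perm:
  "\<forall>g\<in>set (pre @ \<gamma>). 0 < g \<Longrightarrow> sum_list (pre @ \<gamma>) = n \<Longrightarrow> mset \<gamma> = mset \<mu>
    \<Longrightarrow> congr_trace_pm n (tword 0 (pre @ \<gamma>)) (tword 0 (pre @ \<mu>))"
proof (induction \<gamma> arbitrary: \<mu> pre)
  case Nil
  then show ?case by (simp add: congr_trace_pm_refl)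
next
  case (Cons a \<gamma>)
  then obtain xs ys where \<mu>: "\<mu> = xs @ a # ys"
    by (metis list.set_intros(1) set_mset_mset split_list)
  with Cons.prems have \<gamma>: "mset \<gamma> = mset (xs @ ys)"
    by simp
  then have "set (xs @ ys) = set \<gamma>" "sum_list (xs @ ys) = sum_list \<gamma>"
    by (metis mset_eq_setD, metis sum_mset_sum_list)
  have "congr_trace_pm n (tword 0 (pre @ a # \<gamma>)) (tword 0 (pre @ a # xs @ ys))"
    using Cons.IH[OF _ _ \<gamma>, of "pre @ [a]"] Cons.prems by simp
  also have "congr_trace_pm n \<dots> (tword 0 (pre @ xs @ a # ys))"
    using Cons.prems \<open>set (xs @ ys) = set \<gamma>\<close> \<open>sum_list (xs @ ys) = sum_list \<gamma>\<close>
    by (intro congr_trace_pm_move) auto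
  finally show ?case
    unfolding \<mu> .
qed

lemma odd_length_tword_prefix:
  "\<forall>g\<in>set \<gamma>. 0 < g \<Longrightarrow> \<exists>g\<in>set \<gamma>. even g
    \<Longrightarrow> \<exists>xs ys. \<gamma> = xs @ ys \<and> odd (length (tword a xs))"
proof (induction \<gamma> arbitrary: a)
  case Nil
  then show ?case by simp
next
  case (Cons g \<gamma>)
  show ?case
  proof (cases "even g")
    case True
    with Cons.prems have "g # \<gamma> = [g] @ \<gamma> \<and> odd (length (tword a [g]))"
      by simp
    then show ?thesis by blast
  next
    case False
    with Cons.prems obtain xs ys where "\<gamma> = xs @ ys" "odd (length (tword (a + g) xs))"
      using Cons.IH[of "a + g"] by auto
    with False Cons.prems have "g # \<gamma> = (g # xs) @ ys \<and> odd (length (tword a (g # xs)))"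
      by simp
    then show ?thesis by blast
  qed
qed

lemma in_commutator_H_tword_if_even_part:
  assumes pos: "\<forall>g\<in>set \<gamma>. 0 < g" and sum: "sum_list \<gamma> = n"
    and even_n: "even (n - length \<gamma>)" and even_part: "\<exists>g\<in>set \<gamma>. even g"
  shows "in_commutator_H n (wd (tword 0 \<gamma>))"
proof -
  obtain xs ys where \<gamma>: "\<gamma> = xs @ ys" and odd_xs: "odd (length (tword 0 xs))"
    using odd_length_tword_prefix[OF pos even_part] by blast
  define P where "P = tword 0 xs"
  define Q where "Q = tword (sum_list xs) ys"
  have PQ: "tword 0 \<gamma> = P @ Q"
    by (simp add: \<gamma> P_def Q_def tword_append)
  have odd_P: "odd (length P)"
    using odd_xs by (simp add: P_def)
  have "length P + length Q = n - length \<gamma>"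
    using length_tword[OF pos, of 0] sum unfolding PQ by simp
  then have "even (length P + length Q)"
    using even_n by simp
  with odd_P have "(-1 :: complex) ^ (length P * length Q) = -1"
    by simp
  moreover have P: "t_word n P" and Q: "t_word n Q"
    using sum unfolding \<gamma> P_def Q_def by (simp_all add: t_word_tword)
  moreover have "far_apart P Q"
    unfolding P_def Q_def by (simp add: far_apart_tword)
  ultimately have "congr_rel n (-1) (P @ Q) (Q @ P)"
    using congr_rel_far_commute[OF P Q] by simp
  then show ?thesis
    unfolding PQ by (rule in_commutator_H_of_anticommute[OF P Q])
qed

theorem proposition7p1p1:
  fixes n :: nat and \<gamma> \<mu> :: "nat list"
  assumes "is_composition n \<gamma>"
    and "even (n - length \<gamma>)"
    and "mset \<mu> = mset \<gamma>" and "sorted_wrt (\<ge>) \<mu>"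
  shows "((\<exists>m\<in>set \<mu>. even m) \<longrightarrow> in_commutator_H n (t_comp \<gamma>))
       \<and> ((\<forall>m\<in>set \<mu>. odd m) \<longrightarrow>
            (\<exists>\<epsilon>\<in>{1, -1}. in_commutator_H n (t_comp \<gamma> - fscale \<epsilon> (t_comp \<mu>))))"
proof (intro conjI impI)
  have pos: "\<forall>g\<in>set \<gamma>. 0 < g" and sum: "sum_list \<gamma> = n"
    using assms(1) by (auto simp: is_composition_def)
  have "set \<mu> = set \<gamma>"
    using assms(3) by (metis set_mset_mset)
  then show "\<exists>m\<in>set \<mu>. even m \<Longrightarrow> in_commutator_H n (t_comp \<gamma>)"
    unfolding t_comp_def using in_commutator_H_tword_if_even_part[OF pos sum assms(2)] by simp
  have "congr_trace_pm n (tword 0 ([] @ \<gamma>)) (tword 0 ([] @ \<mu>))"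
    using pos sum assms(3) by (intro congr_trace_pm_perm) auto
  then show "\<exists>\<epsilon>\<in>{1, -1}. in_commutator_H n (t_comp \<gamma> - fscale \<epsilon> (t_comp \<mu>))"
    unfolding congr_trace_pm_def congr_trace_def t_comp_def by simp
qed

end
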